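(* Let $Y$ be a random variable whose moment generating function $E[e^{tY}]$ exists for $|t|<r_0$ for some $r_0>0$. Let $(Y_j)_{j\ge1}$ be mutually independent copies of $Y$, $S_0=0$, $S_k=Y_1+\cdots+Y_k$ for $k\ge1$. Define $\phi_n^Y(x,y)$ by $$\Big(1+y\big(E[e^{Yt}]-1\big)\Big)^{x}=\sum_{n=0}^{\infty}\phi_n^Y(x,y)\frac{t^n}{n!}.$$ Then for all integers $m,n\ge 0$, $$\phi_{m+n}^Y(x,y)=\sum_{k=0}^{n}\sum_{j=0}^{m}\binom{m}{j}\phi_j^Y(x-k,y)(x)_k y^k\frac{1}{k!}\sum_{l_1+\cdots+l_k=n}\binom{n}{l_1,\dots,l_k}E\Big[S_k^{m-j}\prod_{i=1}^{k}Y_i^{l_i}\Big],$$ where the inner sum runs over $k$-tuples $(l_1,\dots,l_k)$ of positive integers with sum $n$.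
   Context: $(x)_0=1$, $(x)_k=x(x-1)\cdots(x-k+1)$ for $k\ge1$. The power $(1+u)^x$ is understood via the binomial series $\sum_{k\ge0}\binom{x}{k}u^k$ and the defining identity is one of power series in $t$; $x,y$ are variables. For $k=0$ the sum over $(l_1,\dots,l_k)$ is the empty-composition sum, equal to $1$ if $n=0$ and $0$ otherwise (empty product equal to $1$). $\binom{n}{l_1,\dots,l_k}$ is the multinomial coefficient. *)

theory Defs
  imports "HOL-Probability.Probability" "HOL-Computational_Algebra.Formal_Power_Series"
begin

definition falling :: "real \<Rightarrow> nat \<Rightarrow> real" where
  "falling x k = (\<Prod>i<k. x - real i)"

text \<open>(1+u)^x via the binomial series sum_k (x choose k) u^k, for a formal power series
  u with zero constant term (then only k \<le> n contributes to the n-th coefficient).\<close>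
definition fps_binom_pow :: "real fps \<Rightarrow> real \<Rightarrow> real fps" where
  "fps_binom_pow u x = Abs_fps (\<lambda>n. \<Sum>k\<le>n. (x gchoose k) * fps_nth (u ^ k) n)"

text \<open>The moment generating function E[e^{tY}] as a power series in t:
  sum_n E[Y^n] t^n / n!.\<close>
definition mgf_fps :: "'a measure \<Rightarrow> ('a \<Rightarrow> real) \<Rightarrow> real fps" where
  "mgf_fps M Y = Abs_fps (\<lambda>n. (\<integral>\<omega>. Y \<omega> ^ n \<partial>M) / fact n)"

definition phi :: "'a measure \<Rightarrow> ('a \<Rightarrow> real) \<Rightarrow> nat \<Rightarrow> real \<Rightarrow> real \<Rightarrow> real" where
  "phi M Y n x y = fact n * fps_nth (fps_binom_pow (fps_const y * (mgf_fps M Y - 1)) x) n"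

end

theory Submission
  imports Defs
begin

(* Put u = y (E[e^(tY)] - 1), so that (1 + u)^x is the series defining phi, and let
   D(s,t) = E[e^((s+t)Y)] - E[e^(tY)], so that 1 + u(s+t) = (1 + u(t)) + y D(s,t).
   For x a natural number N the binomial theorem gives
   (1 + u(s+t))^N = sum_k (N choose k) y^k D(s,t)^k (1 + u(t))^(N-k),
   and comparing coefficients of s^n t^m yields the identity; both sides are polynomials in x,
   so it holds for all real x. The coefficient of s^n t^p in D^k is a sum over the compositions
   (l_1,...,l_k) of n of products of moments of Y, and by independence together with the
   multinomial theorem these sums are exactly the expectations E[S_k^p prod_i Y_i^l_i]. *)

(* f(s + t), as a series in s whose coefficients are series in t *)
definition fps_at_sum :: "'a::comm_semiring_1 fps \<Rightarrow> 'a fps fps" where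
  "fps_at_sum f = Abs_fps (\<lambda>a. Abs_fps (\<lambda>b. of_nat ((a + b) choose a) * fps_nth f (a + b)))"

lemma fps_at_sum_nth [simp]:
  "fps_nth (fps_nth (fps_at_sum f) a) b = of_nat ((a + b) choose a) * fps_nth f (a + b)"
  by (simp add: fps_at_sum_def)

lemma fps_at_sum_add: "fps_at_sum (f + g) = fps_at_sum f + fps_at_sum g"
  by (simp add: fps_eq_iff algebra_simps)

lemma fps_at_sum_diff:
  fixes f :: "'a::comm_ring_1 fps"
  shows "fps_at_sum (f - g) = fps_at_sum f - fps_at_sum g"
  by (simp add: fps_eq_iff algebra_simps)

lemma fps_at_sum_const [simp]: "fps_at_sum (fps_const c) = fps_const (fps_const c)"
  by (auto simp: fps_eq_iff)

lemma fps_at_sum_one [simp]: "fps_at_sum 1 = 1"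
  using fps_at_sum_const[of 1] by simp

lemma vandermonde_bounded:
  assumes "c \<le> a + b"
  shows "(\<Sum>i | i \<le> a \<and> i \<le> c \<and> c - i \<le> b. (c choose i) * ((a + b - c) choose (a - i)))
    = (a + b) choose a"
proof -
  have "(\<Sum>i | i \<le> a \<and> i \<le> c \<and> c - i \<le> b. (c choose i) * ((a + b - c) choose (a - i)))
      = (\<Sum>i\<le>a. (c choose i) * ((a + b - c) choose (a - i)))"
    using assms by (intro sum.mono_neutral_left) auto
  also have "\<dots> = (c + (a + b - c)) choose a"
    by (rule vandermonde)
  finally show ?thesis
    using assms by simp
qed

lemma fps_at_sum_mult: "fps_at_sum (f * g) = fps_at_sum f * fps_at_sum g"
proof (rule fps_ext, rule fps_ext)
  fix a b
  define F where "F i j = fps_nth (fps_nth (fps_at_sum f) i) j * fps_nth (fps_nth (fps_at_sum g) (a - i)) (b - j)" for i j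
  define I where "I c = {i. i \<le> a \<and> i \<le> c \<and> c - i \<le> b}" for c
  have "fps_nth (fps_nth (fps_at_sum f * fps_at_sum g) a) b = (\<Sum>i = 0..a. \<Sum>j = 0..b. F i j)"
    by (simp add: fps_mult_nth fps_sum_nth F_def del: fps_at_sum_nth)
  also have "\<dots> = (\<Sum>(i, j) \<in> {0..a} \<times> {0..b}. F i j)"
    by (rule sum.cartesian_product)
  also have "\<dots> = (\<Sum>(c, i) \<in> (SIGMA c:{0..a + b}. I c). F i (c - i))"
    by (rule sum.reindex_bij_witness[of _ "\<lambda>(c, i). (i, c - i)" "\<lambda>(i, j). (i + j, i)"])
       (auto simp: I_def)
  also have "\<dots> = (\<Sum>c = 0..a + b. \<Sum>i \<in> I c. F i (c - i))"
    by (rule sum.Sigma[symmetric]) (auto simp: I_def)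
  also have "\<dots> = (\<Sum>c = 0..a + b. fps_nth f c * fps_nth g (a + b - c) * of_nat ((a + b) choose a))"
  proof (rule sum.cong [OF refl])
    fix c assume "c \<in> {0..a + b}"
    then have "(\<Sum>i \<in> I c. F i (c - i))
        = (\<Sum>i \<in> I c. fps_nth f c * fps_nth g (a + b - c) * of_nat ((c choose i) * ((a + b - c) choose (a - i))))"
      by (intro sum.cong refl) (auto simp: F_def I_def mult_ac)
    also have "\<dots> = fps_nth f c * fps_nth g (a + b - c) * of_nat ((a + b) choose a)"
      using \<open>c \<in> {0..a + b}\<close>
      by (simp add: I_def vandermonde_bounded del: of_nat_mult flip: sum_distrib_left of_nat_sum)
    finally show "(\<Sum>i \<in> I c. F i (c - i)) = fps_nth f c * fps_nth g (a + b - c) * of_nat ((a + b) choose a)" .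
  qed
  also have "\<dots> = fps_nth (fps_nth (fps_at_sum (f * g)) a) b"
    by (simp add: fps_mult_nth sum_distrib_left sum_distrib_right mult_ac)
  finally show "fps_nth (fps_nth (fps_at_sum (f * g)) a) b = fps_nth (fps_nth (fps_at_sum f * fps_at_sum g) a) b" ..
qed

lemma fps_at_sum_power: "fps_at_sum (f ^ N) = fps_at_sum f ^ N"
  by (induction N) (simp_all add: fps_at_sum_mult)

definition fps_increment :: "'a::comm_ring_1 fps \<Rightarrow> 'a fps fps" where
  "fps_increment f = fps_at_sum f - fps_const f"

lemma fps_increment_nth_0 [simp]: "fps_nth (fps_increment f) 0 = 0"
  by (simp add: fps_increment_def fps_eq_iff)

lemma fps_increment_nth:
  "a \<noteq> 0 \<Longrightarrow> fps_nth (fps_nth (fps_increment f) a) b = of_nat ((a + b) choose a) * fps_nth f (a + b)"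
  by (simp add: fps_increment_def)

lemma fps_increment_const_mult:
  "fps_increment (fps_const c * f) = fps_const (fps_const c) * fps_increment f"
  by (simp add: fps_increment_def fps_at_sum_mult algebra_simps)

lemma fps_increment_diff_const: "fps_increment (f - fps_const c) = fps_increment f"
  by (simp add: fps_increment_def fps_at_sum_diff flip: fps_const_sub)

lemma fps_one_plus_power_nth_add:
  fixes u :: "'a::comm_ring_1 fps"
  shows "of_nat ((n + m) choose n) * fps_nth ((1 + u) ^ N) (n + m) =
    (\<Sum>k\<le>n. of_nat (N choose k) *
       (\<Sum>j\<le>m. fps_nth ((1 + u) ^ (N - k)) j * fps_nth (fps_nth (fps_increment u ^ k) n) (m - j)))"
    (is "_ = (\<Sum>k\<le>n. ?c k * ?h k)")
proof -
  have "fps_at_sum (1 + u) = fps_increment u + fps_const (1 + u)"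
    by (simp add: fps_increment_def fps_at_sum_add)
  then have "fps_at_sum ((1 + u) ^ N) = (fps_increment u + fps_const (1 + u)) ^ N"
    by (simp add: fps_at_sum_power)
  also have "\<dots> = (\<Sum>k\<le>N. of_nat (N choose k) * (fps_increment u ^ k * fps_const ((1 + u) ^ (N - k))))"
    by (subst binomial_ring) (simp add: fps_const_power mult.assoc)
  finally have expand: "fps_at_sum ((1 + u) ^ N) =
      (\<Sum>k\<le>N. of_nat (N choose k) * (fps_increment u ^ k * fps_const ((1 + u) ^ (N - k))))" .
  have "of_nat ((n + m) choose n) * fps_nth ((1 + u) ^ N) (n + m) =
      fps_nth (fps_nth (fps_at_sum ((1 + u) ^ N)) n) m"
    by simp
  also have "\<dots> = (\<Sum>k\<le>N. ?c k * ?h k)"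
    unfolding expand fps_sum_nth fps_mult_of_nat_nth fps_mult_right_const_nth
      mult.commute[where a = "fps_nth (fps_increment u ^ k) n" for k]
    by (simp only: fps_mult_nth atLeast0AtMost)
  also have "\<dots> = (\<Sum>k\<le>N + n. ?c k * ?h k)"
    by (rule sum.mono_neutral_left) (auto simp: binomial_eq_0)
  also have "\<dots> = (\<Sum>k\<le>n. ?c k * ?h k)"
    by (intro sum.mono_neutral_right) (auto simp: startsby_zero_power_prefix)
  finally show ?thesis .
qed

lemma fps_binom_pow_of_nat:
  assumes "fps_nth u 0 = 0"
  shows "fps_binom_pow u (real N) = (1 + u) ^ N"
proof (rule fps_ext)
  fix n
  have "fps_nth (fps_binom_pow u (real N)) n = (\<Sum>i\<le>n. of_nat (N choose i) * fps_nth (u ^ i) n)"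
    by (simp add: fps_binom_pow_def binomial_gbinomial)
  also have "\<dots> = (\<Sum>i\<le>N + n. of_nat (N choose i) * fps_nth (u ^ i) n)"
    using assms by (intro sum.mono_neutral_left) (auto simp: startsby_zero_power_prefix)
  also have "\<dots> = (\<Sum>i\<le>N. of_nat (N choose i) * fps_nth (u ^ i) n)"
    by (rule sum.mono_neutral_right) (auto simp: binomial_eq_0)
  also have "\<dots> = fps_nth ((1 + u) ^ N) n"
    unfolding add.commute[of 1 u] binomial_ring by (simp add: fps_sum_nth)
  finally show "fps_nth (fps_binom_pow u (real N)) n = fps_nth ((1 + u) ^ N) n" .
qed

lemma real_polynomial_function_imp_poly:
  fixes f :: "real \<Rightarrow> real"
  assumes "real_polynomial_function f"
  shows "\<exists>p. f = poly p"
  using assms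
proof induction
  case (linear f)
  then obtain c where "f = (\<lambda>x. x * c)"
    using real_bounded_linear by blast
  then have "f = poly [:0, c:]"
    by (auto simp: fun_eq_iff)
  then show ?case ..
next
  case (const c)
  have "(\<lambda>x. c) = poly [:c:]"
    by (auto simp: fun_eq_iff)
  then show ?case ..
next
  case (add f g)
  then obtain p q where "f = poly p" "g = poly q"
    by blast
  then have "(\<lambda>x. f x + g x) = poly (p + q)"
    by (auto simp: fun_eq_iff)
  then show ?case ..
next
  case (mult f g)
  then obtain p q where "f = poly p" "g = poly q"
    by blast
  then have "(\<lambda>x. f x * g x) = poly (p * q)"
    by (auto simp: fun_eq_iff)
  then show ?case ..
qed

lemma real_polynomial_function_eq_0_if_nat_roots:
  fixes f :: "real \<Rightarrow> real"
  assumes "real_polynomial_function f" and "\<And>N. f (real N) = 0"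
  shows "f x = 0"
proof -
  obtain p where f: "f = poly p"
    using real_polynomial_function_imp_poly[OF assms(1)] by blast
  have "infinite (range real)"
    by (simp add: range_inj_infinite inj_on_def)
  moreover have "range real \<subseteq> {x. poly p x = 0}"
    using assms(2) f by auto
  ultimately have "p = 0"
    using poly_roots_finite finite_subset by blast
  then show ?thesis
    using f by simp
qed

lemma real_polynomial_function_gchoose_diff:
  "real_polynomial_function (\<lambda>x. (x - c) gchoose k)"
proof -
  have "real_polynomial_function (\<lambda>x. (\<Prod>i = 0..<k. x - c - real i) / fact k)"
    by force
  then show ?thesis
    by (simp add: gbinomial_prod_rev)
qed

lemma real_polynomial_function_fps_binom_pow_nth:
  "real_polynomial_function (\<lambda>x. fps_nth (fps_binom_pow u (x - c)) n)"
  unfolding fps_binom_pow_def fps_nth_Abs_fps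
  by (intro real_polynomial_function_sum real_polynomial_function.intros(2,4)
      real_polynomial_function_gchoose_diff) auto

lemma fps_binom_pow_nth_add:
  assumes "fps_nth u 0 = 0"
  shows "of_nat ((n + m) choose n) * fps_nth (fps_binom_pow u x) (n + m) =
    (\<Sum>k\<le>n. (x gchoose k) *
       (\<Sum>j\<le>m. fps_nth (fps_binom_pow u (x - real k)) j * fps_nth (fps_nth (fps_increment u ^ k) n) (m - j)))"
    (is "?lhs x = ?rhs x")
proof -
  have "real_polynomial_function (\<lambda>x. fps_nth (fps_binom_pow u x) (n + m))"
    using real_polynomial_function_fps_binom_pow_nth[of u 0] by simp
  moreover have "real_polynomial_function (\<lambda>x. x gchoose k)" for k
    using real_polynomial_function_gchoose_diff[of 0] by simp
  ultimately have "real_polynomial_function (\<lambda>x. ?lhs x - ?rhs x)"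
    by (intro real_polynomial_function_diff real_polynomial_function_sum real_polynomial_function.intros(2,4)
        real_polynomial_function_fps_binom_pow_nth) auto
  moreover have "?lhs (real N) = ?rhs (real N)" for N
  proof -
    have binom_nat: "(real N gchoose k) * fps_nth (fps_binom_pow u (real N - real k)) j
        = of_nat (N choose k) * fps_nth ((1 + u) ^ (N - k)) j" for k j
    proof (cases "k \<le> N")
      case True
      then show ?thesis
        by (simp add: fps_binom_pow_of_nat[OF assms] binomial_gbinomial flip: of_nat_diff)
    next
      case False
      then show ?thesis
        by (simp add: binomial_gbinomial[symmetric] binomial_eq_0)
    qed
    have "?lhs (real N) = of_nat ((n + m) choose n) * fps_nth ((1 + u) ^ N) (n + m)"
      by (simp add: fps_binom_pow_of_nat[OF assms])
    also have "\<dots> = (\<Sum>k\<le>n. of_nat (N choose k) *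
       (\<Sum>j\<le>m. fps_nth ((1 + u) ^ (N - k)) j * fps_nth (fps_nth (fps_increment u ^ k) n) (m - j)))"
      by (rule fps_one_plus_power_nth_add)
    also have "\<dots> = ?rhs (real N)"
      by (simp add: binom_nat sum_distrib_left flip: mult.assoc)
    finally show ?thesis .
  qed
  ultimately show ?thesis
    using real_polynomial_function_eq_0_if_nat_roots[of "\<lambda>x. ?lhs x - ?rhs x" x] by simp
qed

lemma fps_prod_nth_PiE:
  fixes f :: "'i \<Rightarrow> 'a::comm_semiring_1 fps"
  assumes "finite I"
  shows "fps_nth (\<Prod>i\<in>I. f i) n =
    (\<Sum>a \<in> {a \<in> I \<rightarrow>\<^sub>E {..n}. sum a I = n}. \<Prod>i\<in>I. fps_nth (f i) (a i))"
  using assms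
proof (induction I arbitrary: n rule: finite_induct)
  case empty
  show ?case by (cases n) auto
next
  case (insert j I)
  define C where "C c = {a \<in> I \<rightarrow>\<^sub>E {..c}. sum a I = c}" for c :: nat
  have "fps_nth (\<Prod>i\<in>insert j I. f i) n = (\<Sum>c = 0..n. fps_nth (f j) c * fps_nth (\<Prod>i\<in>I. f i) (n - c))"
    using insert.hyps by (simp add: fps_mult_nth)
  also have "\<dots> = (\<Sum>c = 0..n. \<Sum>a \<in> C (n - c). fps_nth (f j) c * (\<Prod>i\<in>I. fps_nth (f i) (a i)))"
    by (simp add: insert.IH C_def sum_distrib_left)
  also have "\<dots> = (\<Sum>(c, a) \<in> (SIGMA c:{0..n}. C (n - c)). fps_nth (f j) c * (\<Prod>i\<in>I. fps_nth (f i) (a i)))"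
    using insert.hyps by (intro sum.Sigma) (auto simp: C_def intro!: finite_PiE)
  also have "\<dots> = (\<Sum>a \<in> {a \<in> insert j I \<rightarrow>\<^sub>E {..n}. sum a (insert j I) = n}. \<Prod>i\<in>insert j I. fps_nth (f i) (a i))"
  proof (rule sum.reindex_bij_witness[of _ "\<lambda>a. (a j, a(j := undefined))" "\<lambda>(c, a). a(j := c)"])
    fix a assume a: "a \<in> {a \<in> insert j I \<rightarrow>\<^sub>E {..n}. sum a (insert j I) = n}"
    have "a i \<le> sum a I" if "i \<in> I" for i
      using that insert.hyps by (intro member_le_sum) auto
    moreover have "sum (a(j := undefined)) I = sum a I"
      using insert.hyps by (intro sum.cong) auto
    ultimately show "(a j, a(j := undefined)) \<in> (SIGMA c:{0..n}. C (n - c))"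
      using a insert.hyps by (auto simp: C_def PiE_def extensional_def Pi_def)
    show "(case (a j, a(j := undefined)) of (c, a) \<Rightarrow> a(j := c)) = a"
      by auto
  next
    fix ca assume ca: "ca \<in> (SIGMA c:{0..n}. C (n - c))"
    obtain c a where [simp]: "ca = (c, a)"
      by (cases ca)
    have "sum (a(j := c)) I = sum a I" "(\<Prod>i\<in>I. fps_nth (f i) ((a(j := c)) i)) = (\<Prod>i\<in>I. fps_nth (f i) (a i))"
      using insert.hyps by (auto intro!: sum.cong prod.cong)
    then show "(case ca of (c, a) \<Rightarrow> a(j := c)) \<in> {a \<in> insert j I \<rightarrow>\<^sub>E {..n}. sum a (insert j I) = n}"
      and "(\<lambda>a. (a j, a(j := undefined))) (case ca of (c, a) \<Rightarrow> a(j := c)) = ca"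
      and "(\<Prod>i\<in>insert j I. fps_nth (f i) ((case ca of (c, a) \<Rightarrow> a(j := c)) i)) =
        (case ca of (c, a) \<Rightarrow> fps_nth (f j) c * (\<Prod>i\<in>I. fps_nth (f i) (a i)))"
      using ca insert.hyps by (auto simp: C_def PiE_def extensional_def Pi_def fun_eq_iff)
  qed
  finally show ?case .
qed

lemma fps_power_nth_compositions:
  fixes f :: "'a::comm_semiring_1 fps"
  assumes "fps_nth f 0 = 0"
  shows "fps_nth (f ^ k) n =
    (\<Sum>a \<in> {a \<in> {1..k} \<rightarrow>\<^sub>E {1..n}. (\<Sum>i = 1..k. a i) = n}. \<Prod>i = 1..k. fps_nth f (a i))"
proof -
  have "fps_nth (f ^ k) n = (\<Sum>a \<in> {a \<in> {1..k} \<rightarrow>\<^sub>E {..n}. sum a {1..k} = n}. \<Prod>i = 1..k. fps_nth f (a i))"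
    using fps_prod_nth_PiE[of "{1..k}" "\<lambda>_. f" n] by simp
  also have "\<dots> = (\<Sum>a \<in> {a \<in> {1..k} \<rightarrow>\<^sub>E {1..n}. (\<Sum>i = 1..k. a i) = n}. \<Prod>i = 1..k. fps_nth f (a i))"
  proof (rule sum.mono_neutral_right)
    show "\<forall>a \<in> {a \<in> {1..k} \<rightarrow>\<^sub>E {..n}. sum a {1..k} = n} - {a \<in> {1..k} \<rightarrow>\<^sub>E {1..n}. (\<Sum>i = 1..k. a i) = n}.
        (\<Prod>i = 1..k. fps_nth f (a i)) = 0"
      using assms by (force simp: PiE_def Pi_def not_le intro: prod_zero)
    show "finite {a \<in> {1..k} \<rightarrow>\<^sub>E {..n}. sum a {1..k} = n}"
      by (rule rev_finite_subset[OF finite_PiE[of "{1..k}" "\<lambda>_. {..n}"]]) auto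
  qed (auto simp: PiE_def Pi_def)
  finally show ?thesis .
qed

lemma power_div_fact_le_exp:
  fixes z :: real
  assumes "0 \<le> z"
  shows "z ^ q / fact q \<le> exp z"
proof -
  have exp_sums: "(\<lambda>n. z ^ n / fact n) sums exp z"
    using exp_converges[of z] by (simp add: divide_inverse mult.commute)
  have "(\<Sum>n\<in>{q}. z ^ n / fact n) \<le> (\<Sum>n. z ^ n / fact n)"
    using exp_sums assms by (intro sum_le_suminf) (auto simp: sums_iff)
  then show ?thesis
    using exp_sums by (simp add: sums_iff)
qed

lemma integrable_power_if_integrable_exp:
  fixes Y :: "'a \<Rightarrow> real"
  assumes "Y \<in> borel_measurable M" and "0 < r"
    and "integrable M (\<lambda>\<omega>. exp (r * Y \<omega>))" and "integrable M (\<lambda>\<omega>. exp (- r * Y \<omega>))"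
  shows "integrable M (\<lambda>\<omega>. Y \<omega> ^ q)"
proof (rule Bochner_Integration.integrable_bound)
  show "integrable M (\<lambda>\<omega>. fact q / r ^ q * (exp (r * Y \<omega>) + exp (- r * Y \<omega>)))"
    using assms by auto
  show "(\<lambda>\<omega>. Y \<omega> ^ q) \<in> borel_measurable M"
    using assms(1) by measurable
  show "AE \<omega> in M. norm (Y \<omega> ^ q) \<le> norm (fact q / r ^ q * (exp (r * Y \<omega>) + exp (- r * Y \<omega>)))"
  proof (rule AE_I2)
    fix \<omega>
    have "(r * \<bar>Y \<omega>\<bar>) ^ q / fact q \<le> exp (r * \<bar>Y \<omega>\<bar>)"
      using assms(2) by (intro power_div_fact_le_exp) simp
    also have "\<dots> \<le> exp (r * Y \<omega>) + exp (- r * Y \<omega>)"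
      by (cases "Y \<omega> \<ge> 0") auto
    finally have "r ^ q * \<bar>Y \<omega>\<bar> ^ q \<le> fact q * (exp (r * Y \<omega>) + exp (- r * Y \<omega>))"
      by (simp add: power_mult_distrib divide_le_eq mult.commute)
    then show "norm (Y \<omega> ^ q) \<le> norm (fact q / r ^ q * (exp (r * Y \<omega>) + exp (- r * Y \<omega>)))"
      using assms(2) by (simp add: power_abs abs_mult field_simps add_pos_pos)
  qed
qed

lemma fps_exp_sum: "finite I \<Longrightarrow> fps_exp (\<Sum>i\<in>I. z i) = (\<Prod>i\<in>I. fps_exp (z i :: 'a::field_char_0))"
  by (induction I rule: finite_induct) (simp_all add: fps_exp_add_mult)

lemma sum_power_multinomial:
  fixes z :: "'i \<Rightarrow> 'a::field_char_0"
  assumes "finite I"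
  shows "(\<Sum>i\<in>I. z i) ^ p =
    fact p * (\<Sum>b \<in> {b \<in> I \<rightarrow>\<^sub>E {..p}. sum b I = p}. \<Prod>i\<in>I. z i ^ b i / fact (b i))"
proof -
  have "(\<Sum>i\<in>I. z i) ^ p / fact p = fps_nth (\<Prod>i\<in>I. fps_exp (z i)) p"
    by (simp flip: fps_exp_sum[OF assms])
  also have "\<dots> = (\<Sum>b \<in> {b \<in> I \<rightarrow>\<^sub>E {..p}. sum b I = p}. \<Prod>i\<in>I. z i ^ b i / fact (b i))"
    by (simp add: fps_prod_nth_PiE assms)
  finally show ?thesis
    by (simp add: field_simps)
qed

lemma
  fixes X Y :: "'a \<Rightarrow> real" and g :: "real \<Rightarrow> real"
  assumes "distr M borel X = distr M borel Y"
    and "X \<in> borel_measurable M" and "Y \<in> borel_measurable M" and "g \<in> borel_measurable borel"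
  shows integrable_comp_eq_if_distr_eq: "integrable M (\<lambda>\<omega>. g (X \<omega>)) \<longleftrightarrow> integrable M (\<lambda>\<omega>. g (Y \<omega>))"
    and integral_comp_eq_if_distr_eq: "(\<integral>\<omega>. g (X \<omega>) \<partial>M) = (\<integral>\<omega>. g (Y \<omega>) \<partial>M)"
  using assms
  by (simp_all add: integrable_distr_eq[symmetric] integral_distr[symmetric])

lemma (in prob_space) integral_iid_sum_power_mult_prod_power:
  fixes X :: "'i \<Rightarrow> 'a \<Rightarrow> real" and Y :: "'a \<Rightarrow> real"
  assumes "finite I" and indep: "indep_vars (\<lambda>_. borel) X I"
    and distr_X: "\<And>i. i \<in> I \<Longrightarrow> distr M borel (X i) = distr M borel Y"
    and "Y \<in> borel_measurable M" and moments: "\<And>q. integrable M (\<lambda>\<omega>. Y \<omega> ^ q)"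
  shows "(\<integral>\<omega>. (\<Sum>i\<in>I. X i \<omega>) ^ p * (\<Prod>i\<in>I. X i \<omega> ^ l i) \<partial>M) =
    fact p * (\<Sum>b \<in> {b \<in> I \<rightarrow>\<^sub>E {..p}. sum b I = p}. \<Prod>i\<in>I. (\<integral>\<omega>. Y \<omega> ^ (l i + b i) \<partial>M) / fact (b i))"
proof -
  define B where "B = {b \<in> I \<rightarrow>\<^sub>E {..p}. sum b I = p}"
  have X_meas [measurable]: "X i \<in> borel_measurable M" if "i \<in> I" for i
    using indep that by (auto simp: indep_vars_def)
  have integrable_X: "integrable M (\<lambda>\<omega>. X i \<omega> ^ q / c)" and integral_X: "(\<integral>\<omega>. X i \<omega> ^ q \<partial>M) = (\<integral>\<omega>. Y \<omega> ^ q \<partial>M)"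
    if "i \<in> I" for i q c
    using integrable_comp_eq_if_distr_eq[OF distr_X[OF that] X_meas[OF that] assms(4), of "\<lambda>y. y ^ q"]
      integral_comp_eq_if_distr_eq[OF distr_X[OF that] X_meas[OF that] assms(4), of "\<lambda>y. y ^ q"] moments
    by auto
  have indep_b: "indep_vars (\<lambda>_. borel) (\<lambda>i \<omega>. X i \<omega> ^ (l i + b i) / fact (b i)) I" for b
    using indep_vars_compose2[OF indep, of "\<lambda>i x. x ^ (l i + b i) / fact (b i)" "\<lambda>_. borel"] by simp
  have expand: "(\<Sum>i\<in>I. X i \<omega>) ^ p * (\<Prod>i\<in>I. X i \<omega> ^ l i) =
      (\<Sum>b\<in>B. fact p * (\<Prod>i\<in>I. X i \<omega> ^ (l i + b i) / fact (b i)))" for \<omega>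
    by (simp add: sum_power_multinomial[OF assms(1)] B_def sum_distrib_left sum_distrib_right
        power_add times_divide_eq_right mult_ac flip: prod.distrib)
  have "(\<integral>\<omega>. (\<Sum>i\<in>I. X i \<omega>) ^ p * (\<Prod>i\<in>I. X i \<omega> ^ l i) \<partial>M) =
      (\<Sum>b\<in>B. fact p * (\<integral>\<omega>. (\<Prod>i\<in>I. X i \<omega> ^ (l i + b i) / fact (b i)) \<partial>M))"
    unfolding expand
    by (subst Bochner_Integration.integral_sum) (auto intro!: indep_vars_integrable[OF assms(1) indep_b] integrable_X)
  also have "\<dots> = (\<Sum>b\<in>B. fact p * (\<Prod>i\<in>I. (\<integral>\<omega>. X i \<omega> ^ (l i + b i) / fact (b i) \<partial>M)))"
    by (subst indep_vars_lebesgue_integral[OF assms(1) indep_b]) (auto intro: integrable_X)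
  also have "\<dots> = (\<Sum>b\<in>B. fact p * (\<Prod>i\<in>I. (\<integral>\<omega>. Y \<omega> ^ (l i + b i) \<partial>M) / fact (b i)))"
    by (simp add: integral_X)
  finally show ?thesis
    by (simp add: B_def sum_distrib_left)
qed

lemma (in prob_space) mgf_fps_nth_0 [simp]: "fps_nth (mgf_fps M Y) 0 = 1"
  by (simp add: mgf_fps_def prob_space)

lemma fps_increment_mgf_fps_nth:
  assumes "a \<noteq> 0"
  shows "fps_nth (fps_nth (fps_increment (mgf_fps M Y)) a) b = (\<integral>\<omega>. Y \<omega> ^ (a + b) \<partial>M) / (fact a * fact b)"
  using assms by (simp add: fps_increment_nth mgf_fps_def binomial_fact)

lemma (in prob_space) phi_add_eq_increment:
  "phi M Y (m + n) x y =
    (\<Sum>k\<le>n. \<Sum>j\<le>m. real (m choose j) * phi M Y j (x - real k) y * falling x k * y ^ k * (1 / fact k)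
       * (fact n * fact (m - j) * fps_nth (fps_nth (fps_increment (mgf_fps M Y) ^ k) n) (m - j)))"
    (is "_ = ?rhs")
proof -
  define u where "u = fps_const y * (mgf_fps M Y - 1)"
  define D where "D k = fps_increment (mgf_fps M Y) ^ k" for k
  have "fps_nth u 0 = 0"
    by (simp add: u_def)
  have increment_u: "fps_increment u ^ k = fps_const (fps_const (y ^ k)) * D k" for k
    by (simp add: u_def D_def fps_increment_const_mult power_mult_distrib fps_const_power
        fps_increment_diff_const[of _ 1, simplified])
  have phi_u: "phi M Y j x' y = fact j * fps_nth (fps_binom_pow u x') j" for j x'
    by (simp add: phi_def u_def)
  have "phi M Y (m + n) x y = fact m * fact n * (of_nat ((n + m) choose n) * fps_nth (fps_binom_pow u x) (n + m))"
    by (simp add: phi_u binomial_fact add.commute)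
  also have "\<dots> = fact m * fact n * (\<Sum>k\<le>n. (x gchoose k) *
       (\<Sum>j\<le>m. fps_nth (fps_binom_pow u (x - real k)) j * fps_nth (fps_nth (fps_increment u ^ k) n) (m - j)))"
    by (simp add: fps_binom_pow_nth_add[OF \<open>fps_nth u 0 = 0\<close>])
  also have "\<dots> = ?rhs"
    unfolding sum_distrib_left D_def[symmetric]
  proof (intro sum.cong refl)
    fix k j assume "j \<in> {..m}"
    then have "fact m = real (m choose j) * fact j * fact (m - j)"
      by (simp add: binomial_fact)
    moreover have "falling x k = fact k * (x gchoose k)"
      by (simp add: falling_def gbinomial_mult_fact atLeast0LessThan)
    ultimately show "fact m * fact n * ((x gchoose k) * (fps_nth (fps_binom_pow u (x - real k)) j
          * fps_nth (fps_nth (fps_increment u ^ k) n) (m - j)))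
        = real (m choose j) * phi M Y j (x - real k) y * falling x k * y ^ k * (1 / fact k)
          * (fact n * fact (m - j) * fps_nth (fps_nth (D k) n) (m - j))"
      by (simp add: increment_u phi_u)
  qed
  finally show ?thesis .
qed

lemma (in prob_space) moment_sum_eq_increment_power_nth:
  fixes Y :: "'a \<Rightarrow> real" and Ys :: "nat \<Rightarrow> 'a \<Rightarrow> real"
  assumes "Y \<in> borel_measurable M" and moments: "\<And>q. integrable M (\<lambda>\<omega>. Y \<omega> ^ q)"
    and indep: "indep_vars (\<lambda>_. borel) Ys {1..k}"
    and distr_Ys: "\<And>i. i \<in> {1..k} \<Longrightarrow> distr M borel (Ys i) = distr M borel Y"
  shows "(\<Sum>l \<in> {l \<in> {1..k} \<rightarrow>\<^sub>E {1..n}. (\<Sum>i = 1..k. l i) = n}.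
      fact n / (\<Prod>i = 1..k. fact (l i))
      * expectation (\<lambda>\<omega>. (\<Sum>i = 1..k. Ys i \<omega>) ^ p * (\<Prod>i = 1..k. Ys i \<omega> ^ l i)))
    = fact n * fact p * fps_nth (fps_nth (fps_increment (mgf_fps M Y) ^ k) n) p"
proof -
  define L where "L = {l \<in> {1..k} \<rightarrow>\<^sub>E {1..n}. (\<Sum>i = 1..k. l i) = n}"
  define B where "B = {b \<in> {1..k} \<rightarrow>\<^sub>E {..p}. sum b {1..k} = p}"
  define \<mu> where "\<mu> q = (\<integral>\<omega>. Y \<omega> ^ q \<partial>M)" for q
  have "fps_nth (fps_nth (fps_increment (mgf_fps M Y) ^ k) n) p
      = (\<Sum>l\<in>L. \<Sum>b\<in>B. \<Prod>i = 1..k. fps_nth (fps_nth (fps_increment (mgf_fps M Y)) (l i)) (b i))"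
    by (simp add: fps_power_nth_compositions fps_sum_nth fps_prod_nth_PiE L_def B_def)
  also have "\<dots> = (\<Sum>l\<in>L. \<Sum>b\<in>B. \<Prod>i = 1..k. \<mu> (l i + b i) / (fact (l i) * fact (b i)))"
  proof (intro sum.cong prod.cong refl)
    fix l b i assume "l \<in> L" "i \<in> {1..k}"
    then have "l i \<noteq> 0"
      unfolding L_def using PiE_mem[of l "{1..k}" "\<lambda>_. {1..n}" i] by auto
    then show "fps_nth (fps_nth (fps_increment (mgf_fps M Y)) (l i)) (b i) = \<mu> (l i + b i) / (fact (l i) * fact (b i))"
      by (simp add: fps_increment_mgf_fps_nth \<mu>_def)
  qed
  finally have increment_nth: "fps_nth (fps_nth (fps_increment (mgf_fps M Y) ^ k) n) p
      = (\<Sum>l\<in>L. \<Sum>b\<in>B. \<Prod>i = 1..k. \<mu> (l i + b i) / (fact (l i) * fact (b i)))" .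
  have "expectation (\<lambda>\<omega>. (\<Sum>i = 1..k. Ys i \<omega>) ^ p * (\<Prod>i = 1..k. Ys i \<omega> ^ l i))
      = fact p * (\<Sum>b\<in>B. \<Prod>i = 1..k. \<mu> (l i + b i) / fact (b i))" for l
    unfolding B_def \<mu>_def
    by (rule integral_iid_sum_power_mult_prod_power[OF _ indep distr_Ys assms(1) moments]) simp_all
  then show ?thesis
    unfolding increment_nth L_def[symmetric]
    by (simp add: sum_distrib_left prod_dividef prod.distrib mult_ac)
qed

theorem theorem2p2:
  fixes M :: "'a measure" and Y :: "'a \<Rightarrow> real" and Ys :: "nat \<Rightarrow> 'a \<Rightarrow> real"
    and r0 x y :: real and m n :: nat
  assumes "prob_space M"
    and "Y \<in> borel_measurable M"
    and "r0 > 0"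
    and "\<forall>t. \<bar>t\<bar> < r0 \<longrightarrow> integrable M (\<lambda>\<omega>. exp (t * Y \<omega>))"
    and "\<forall>j\<ge>1. Ys j \<in> borel_measurable M"
    and "\<forall>j\<ge>1. distr M borel (Ys j) = distr M borel Y"
    and "prob_space.indep_vars M (\<lambda>_. borel) Ys {1..}"
  shows "phi M Y (m + n) x y =
    (\<Sum>k\<le>n. \<Sum>j\<le>m. real (m choose j) * phi M Y j (x - real k) y * falling x k * y ^ k
        * (1 / fact k)
        * (\<Sum>l \<in> {l \<in> {1..k} \<rightarrow>\<^sub>E {1..n}. (\<Sum>i=1..k. l i) = n}.
             (fact n / (\<Prod>i=1..k. fact (l i)))
             * prob_space.expectation M
                 (\<lambda>\<omega>. (\<Sum>i=1..k. Ys i \<omega>) ^ (m - j) * (\<Prod>i=1..k. Ys i \<omega> ^ l i))))"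
proof -
  interpret prob_space M
    by fact
  have moments: "integrable M (\<lambda>\<omega>. Y \<omega> ^ q)" for q
    using assms(3) assms(4)[rule_format, of "r0 / 2"] assms(4)[rule_format, of "- (r0 / 2)"]
    by (intro integrable_power_if_integrable_exp[OF assms(2), of "r0 / 2"]) auto
  have indep: "indep_vars (\<lambda>_. borel) Ys {1..k}" for k
    using assms(7) by (rule indep_vars_subset) auto
  have "(\<Sum>l \<in> {l \<in> {1..k} \<rightarrow>\<^sub>E {1..n}. (\<Sum>i=1..k. l i) = n}.
      fact n / (\<Prod>i=1..k. fact (l i)) * expectation (\<lambda>\<omega>. (\<Sum>i=1..k. Ys i \<omega>) ^ p * (\<Prod>i=1..k. Ys i \<omega> ^ l i)))
    = fact n * fact p * fps_nth (fps_nth (fps_increment (mgf_fps M Y) ^ k) n) p" for k p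
    using assms(6) by (intro moment_sum_eq_increment_power_nth[OF assms(2) moments indep]) auto
  then show ?thesis
    by (simp only: phi_add_eq_increment)
qed

end
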